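(* Let $c_2>0$ and $c_3\in\mathbb{R}$. For $\alpha\ge c_2$ put $J(\alpha)=\int_{c_2}^{\alpha}c_2^{2m-1}\left(\rho^{2m}-c_2^{2m}\right)^{-\frac{2m-1}{2m}}d\rho$. Then $d_1:=\lim_{\alpha\to\infty}J(\alpha)$ is a finite positive number, and $J$ is a strictly increasing bijection $[c_2,\infty)\to[0,d_1)$. Define $\hat\alpha:(c_3-d_1,c_3+d_1)\to[c_2,\infty)$ by letting $\hat\alpha(u)$ be the unique $\alpha\ge c_2$ with $J(\alpha)=|u-c_3|$ (so $\hat\alpha(c_3)=c_2$). Then $\hat\alpha$ is a $C^2$ function with $\hat\alpha'(c_3)=\hat\alpha''(c_3)=0$, $\hat\alpha(u)\to\infty$ as $u\to c_3\pm d_1$, and the rotational surface $$\hat f(u,v)=(\hat\alpha(u)\cos v,\ \hat\alpha(u)\sin v,\ u),\qquad (u,v)\in(c_3-d_1,c_3+d_1)\times[0,2\pi],$$ has a Birkhoff–Gauss map that extends as a $C^1$ map to the whole domain and is minimal, i.e. its Minkowski mean curvature vanishes identically.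
   Context: Fix an integer $m\ge 2$. Let $\Phi(x_1,x_2,x_3)=(x_1^2+x_2^2)^m+x_3^{2m}$ and let $\|\cdot\|$ be the norm on $\mathbb{R}^3$ whose unit sphere is $S=\{x\in\mathbb{R}^3:\Phi(x)=1\}$ (a smooth, strictly convex surface). For a surface given by a parametrization $f(s,v)$, its Birkhoff–Gauss map $\eta$ is the map into $S$ defined by requiring $\eta\in S$ and $\nabla\Phi(\eta)=\mu\, f_s\times f_v$ for some function $\mu>0$, where $\times$ is the standard cross product (so the tangent plane of $S$ at $\eta(p)$ is parallel to $T_pM$, and $d\eta_p$ is an endomorphism of $T_pM$). Where $\eta$ is $C^1$, the Minkowski Gaussian curvature is $K=\det(d\eta_p)$ and the Minkowski mean curvature is $H=\tfrac12\operatorname{trace}(d\eta_p)$; the surface is minimal if $H\equiv 0$. *)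

theory Defs
  imports "HOL-Analysis.Analysis"
begin

definition Phi :: "nat \<Rightarrow> real^3 \<Rightarrow> real" where
  "Phi m x = ((x$1)^2 + (x$2)^2)^m + (x$3)^(2*m)"

definition unit_sphere :: "nat \<Rightarrow> (real^3) set" where
  "unit_sphere m = {x. Phi m x = 1}"

definition partial_s :: "(real \<times> real \<Rightarrow> real^3) \<Rightarrow> real \<times> real \<Rightarrow> real^3" where
  "partial_s f p = frechet_derivative f (at p) (1, 0)"

definition partial_v :: "(real \<times> real \<Rightarrow> real^3) \<Rightarrow> real \<times> real \<Rightarrow> real^3" where
  "partial_v f p = frechet_derivative f (at p) (0, 1)"

text \<open>eta(p) is the Birkhoff-Gauss image of p: eta(p) in S and grad Phi(eta(p)) = mu (f_s x f_v)
  for some mu > 0; the gradient g of Phi at a point is expressed by Phi having derivative h |-> g . h.\<close>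
definition BG_at :: "nat \<Rightarrow> (real \<times> real \<Rightarrow> real^3) \<Rightarrow> (real \<times> real \<Rightarrow> real^3) \<Rightarrow> real \<times> real \<Rightarrow> bool" where
  "BG_at m f \<eta> p \<longleftrightarrow> \<eta> p \<in> unit_sphere m \<and>
     (\<exists>\<mu>>0. (Phi m has_derivative (\<lambda>h. inner (\<mu> *\<^sub>R cross3 (partial_s f p) (partial_v f p)) h)) (at (\<eta> p)))"

text \<open>d eta_p as endomorphism of T_pM = span{f_s,f_v}: it sends f_s to eta_s and f_v to eta_v.
  It is an endomorphism iff eta_s, eta_v lie in the span; its matrix is [[a,c],[b,d]].\<close>
definition dEta_endomorphism :: "real^3 \<Rightarrow> real^3 \<Rightarrow> real^3 \<Rightarrow> real^3 \<Rightarrow> bool" where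
  "dEta_endomorphism fs fv es ev \<longleftrightarrow>
     (\<exists>a b c d. es = a *\<^sub>R fs + b *\<^sub>R fv \<and> ev = c *\<^sub>R fs + d *\<^sub>R fv)"

definition mink_mean_curv :: "real^3 \<Rightarrow> real^3 \<Rightarrow> real^3 \<Rightarrow> real^3 \<Rightarrow> real" where
  "mink_mean_curv fs fv es ev =
     (THE H. \<exists>a b c d. es = a *\<^sub>R fs + b *\<^sub>R fv \<and> ev = c *\<^sub>R fs + d *\<^sub>R fv \<and> H = (a + d) / 2)"

definition J_integrand :: "nat \<Rightarrow> real \<Rightarrow> real \<Rightarrow> real" where
  "J_integrand m c2 \<rho> = c2^(2*m-1) * (\<rho>^(2*m) - c2^(2*m)) powr (- (real (2*m-1) / real (2*m)))"

definition J :: "nat \<Rightarrow> real \<Rightarrow> real \<Rightarrow> real" where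
  "J m c2 \<alpha> = integral {c2..\<alpha>} (J_integrand m c2)"

definition rot_surface :: "(real \<Rightarrow> real) \<Rightarrow> real \<times> real \<Rightarrow> real^3" where
  "rot_surface a p = vector [a (fst p) * cos (snd p), a (fst p) * sin (snd p), fst p]"

end

theory Submission
  imports Defs
begin

text \<open>
  The horizontal section of the unit sphere S at height z is a circle of radius
  T(z) = (1 - z^(2m))^(1/(2m)). The substitution \<rho> = c2 / T(z) turns J(\<alpha>) into c2 G(T(c2/\<alpha>)),
  where G(z) = integral of T^-2 over [0, z] is odd and strictly increasing on (-1, 1); for m \<ge> 2
  it is bounded, because T(z)^2 \<ge> sqrt(1 - z), and d1 = c2 sup G. The profile is
  \<alpha>(u) = c2 / T(w(u)) with w(u) = G^-1((u - c3) / c2), i.e. w' = T(w)^2 / c2, whence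
  \<alpha>' = (w / T(w))^(2m-1). This identity says that \<eta> = (-T(w) cos v, -T(w) sin v, w) \<in> S has
  \<nabla>\<Phi>(\<eta>) parallel to f_u \<times> f_v, so \<eta> is the Birkhoff-Gauss map. Differentiating,
  \<eta>_u = k f_u and \<eta>_v = -k f_v with k = T(w)^2 / c2, so d\<eta> is trace free.
\<close>

lemma filterlim_at_top_if_strict_mono_tendsto:
  fixes f g :: "real \<Rightarrow> real"
  assumes mono: "strict_mono_on {a..} f" and bound: "\<And>x. a \<le> x \<Longrightarrow> f x < l"
    and lim: "((\<lambda>x. f (g x)) \<longlongrightarrow> l) F" and ge: "eventually (\<lambda>x. a \<le> g x) F"
  shows "filterlim g at_top F"
  unfolding filterlim_at_top
proof
  fix B
  define b where "b = max B a"
  have "eventually (\<lambda>x. f b < f (g x)) F"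
    using bound[of b] by (intro order_tendstoD(1)[OF lim]) (simp add: b_def)
  with ge show "eventually (\<lambda>x. B \<le> g x) F"
  proof eventually_elim
    case (elim x)
    then have "\<not> g x \<le> b"
      using strict_mono_on_leD[OF mono, of "g x" b] by (auto simp: b_def)
    then show ?case
      by (simp add: b_def)
  qed
qed

section \<open>Rotational surfaces\<close>

lemma vector_3_eq_axis:
  "(vector [x, y, z] :: real^3) = x *\<^sub>R axis 1 1 + y *\<^sub>R axis 2 1 + z *\<^sub>R axis 3 1"
  by (simp add: vec_eq_iff forall_3 axis_def)

lemma has_derivative_vector_3:
  assumes "(f1 has_derivative f1') F" "(f2 has_derivative f2') F" "(f3 has_derivative f3') F"
  shows "((\<lambda>p. vector [f1 p, f2 p, f3 p] :: real^3) has_derivative (\<lambda>h. vector [f1' h, f2' h, f3' h])) F"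
  unfolding vector_3_eq_axis by (intro derivative_intros assms)

lemma continuous_on_vector_3:
  assumes "continuous_on S f1" "continuous_on S f2" "continuous_on S f3"
  shows "continuous_on S (\<lambda>p. vector [f1 p, f2 p, f3 p] :: real^3)"
  unfolding vector_3_eq_axis by (intro continuous_intros assms)

lemma has_derivative_rotation:
  assumes x: "(x has_real_derivative x') (at u)" and y: "(y has_real_derivative y') (at u)"
  shows "((\<lambda>p. vector [x (fst p) * cos (snd p), x (fst p) * sin (snd p), y (fst p)] :: real^3)
    has_derivative (\<lambda>h. fst h *\<^sub>R vector [x' * cos v, x' * sin v, y']
                       + snd h *\<^sub>R vector [- (x u * sin v), x u * cos v, 0])) (at (u, v))"
proof -
  have fst: "((\<lambda>p. f (fst p)) has_derivative (\<lambda>h. f' * fst h)) (at (u, v))"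
    if "(f has_real_derivative f') (at u)" for f f'
    using has_derivative_compose[OF bounded_linear_imp_has_derivative[OF bounded_linear_fst],
        where x="(u, v)" and g=f and g'="(*) f'"] that by (simp add: has_field_derivative_def)
  have snd: "((\<lambda>p. f (snd p)) has_derivative (\<lambda>h. f' * snd h)) (at (u, v))"
    if "(f has_real_derivative f') (at v)" for f f'
    using has_derivative_compose[OF bounded_linear_imp_has_derivative[OF bounded_linear_snd],
        where x="(u, v)" and g=f and g'="(*) f'"] that by (simp add: has_field_derivative_def)
  show ?thesis
    by (rule has_derivative_eq_rhs[OF has_derivative_vector_3[OF
          has_derivative_mult[OF fst[OF x] snd[OF DERIV_cos]]
          has_derivative_mult[OF fst[OF x] snd[OF DERIV_sin]] fst[OF y]]])
      (auto simp: fun_eq_iff vec_eq_iff forall_3 algebra_simps)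
qed

lemma rot_surface_has_derivative:
  assumes "(a has_real_derivative a') (at u)"
  shows "(rot_surface a has_derivative (\<lambda>h. fst h *\<^sub>R vector [a' * cos v, a' * sin v, 1]
                       + snd h *\<^sub>R vector [- (a u * sin v), a u * cos v, 0])) (at (u, v))"
  using has_derivative_rotation[OF assms DERIV_ident, of v]
  by (simp add: rot_surface_def[abs_def] case_prod_beta)

lemma partial_rot_surface:
  assumes "(a has_real_derivative a') (at u)"
  shows "partial_s (rot_surface a) (u, v) = vector [a' * cos v, a' * sin v, 1]"
    and "partial_v (rot_surface a) (u, v) = vector [- (a u * sin v), a u * cos v, 0]"
  using frechet_derivative_at[OF rot_surface_has_derivative[OF assms, of v], symmetric]
  by (simp_all add: partial_s_def partial_v_def)

lemma cross3_rotation: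
  "cross3 (vector [a' * cos v, a' * sin v, 1]) (vector [- (r * sin v), r * cos v, 0])
     = r *\<^sub>R vector [- cos v, - sin v, a']"
proof -
  have "a' * r * (cos v * cos v) + a' * r * (sin v * sin v) = a' * r"
    by (simp add: distrib_left[symmetric])
  then show ?thesis
    by (simp add: cross3_def vec_eq_iff forall_3 algebra_simps)
qed

lemma Phi_has_derivative:
  "(Phi m has_derivative (\<lambda>h. real m * ((x$1)^2 + (x$2)^2)^(m-1) * (2 * x$1 * h$1 + 2 * x$2 * h$2)
                            + real (2*m) * (x$3)^(2*m-1) * h$3)) (at x)"
  unfolding Phi_def[abs_def]
  by (rule has_derivative_eq_rhs) (auto intro!: derivative_eq_intros bounded_linear_vec_nth
      bounded_linear_imp_has_derivative simp: fun_eq_iff algebra_simps)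

lemma BG_at_rot_surface:
  assumes m: "0 < m"
    and a: "(a has_real_derivative a') (at u)" "0 < a u"
    and t: "0 < t" "t^(2*m) + z^(2*m) = 1"
    and slope: "a' * t^(2*m-1) = z^(2*m-1)"
    and eta: "\<eta> (u, v) = vector [- (t * cos v), - (t * sin v), z]"
  shows "BG_at m (rot_surface a) \<eta> (u, v)"
proof -
  define x where "x = \<eta> (u, v)"
  have x: "x$1 = - (t * cos v)" "x$2 = - (t * sin v)" "x$3 = z"
    by (simp_all add: x_def eta)
  have circle: "(x$1)^2 + (x$2)^2 = t^2"
    unfolding x power2_minus by (simp add: power_mult_distrib flip: distrib_left)
  have "(t^2)^(m-1) * t = t^(2*(m-1)+1)"
    by (simp add: power_mult power_add)
  also have "2*(m-1)+1 = 2*m-1"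
    using m by simp
  finally have odd_power: "(t^2)^(m-1) * t = t^(2*m-1)" .
  define \<mu> where "\<mu> = 2 * real m * t^(2*m-1) / a u"
  have gradient: "real m * ((x$1)^2 + (x$2)^2)^(m-1) * (2 * x$1 * h$1 + 2 * x$2 * h$2)
        + real (2*m) * (x$3)^(2*m-1) * h$3
      = inner (\<mu> *\<^sub>R cross3 (partial_s (rot_surface a) (u, v)) (partial_v (rot_surface a) (u, v))) h"
    for h :: "real^3"
  proof -
    have "real m * ((x$1)^2 + (x$2)^2)^(m-1) * (2 * x$1 * h$1 + 2 * x$2 * h$2)
        + real (2*m) * (x$3)^(2*m-1) * h$3
      = 2 * real m * (((t^2)^(m-1) * t) * (- cos v * h$1 - sin v * h$2) + z^(2*m-1) * h$3)"
      unfolding circle unfolding x by (simp add: algebra_simps)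
    also have "\<dots> = (\<mu> * a u) * (- cos v * h$1 - sin v * h$2 + a' * h$3)"
      using a(2) unfolding odd_power slope[symmetric] by (simp add: \<mu>_def algebra_simps)
    also have "\<dots> = inner (\<mu> *\<^sub>R cross3 (partial_s (rot_surface a) (u, v)) (partial_v (rot_surface a) (u, v))) h"
      unfolding partial_rot_surface[OF a(1)] cross3_rotation
      by (simp add: inner_vec_def sum_3 algebra_simps)
    finally show ?thesis .
  qed
  have "Phi m x = 1"
    using t(2) circle x(3) by (simp add: Phi_def flip: power_mult)
  moreover have "0 < \<mu>"
    using m t a(2) by (simp add: \<mu>_def)
  moreover have "(Phi m has_derivative
      (\<lambda>h. inner (\<mu> *\<^sub>R cross3 (partial_s (rot_surface a) (u, v)) (partial_v (rot_surface a) (u, v))) h)) (at x)"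
    using Phi_has_derivative[of m x] unfolding gradient .
  ultimately show ?thesis
    unfolding BG_at_def unit_sphere_def mem_Collect_eq x_def by blast
qed

lemma rotation_tangents_independent:
  assumes "r \<noteq> 0"
    and "x *\<^sub>R vector [a' * cos v, a' * sin v, 1] + y *\<^sub>R vector [- (r * sin v), r * cos v, 0] = (0 :: real^3)"
  shows "x = 0 \<and> y = 0"
proof -
  have "x = 0"
    using arg_cong[OF assms(2), of "\<lambda>w. w $ 3"] by simp
  moreover have "(y * r) * (sin v)^2 + (y * r) * (cos v)^2 = 0"
    using arg_cong[OF assms(2), of "\<lambda>w. sin v * w $ 1 - cos v * w $ 2"] \<open>x = 0\<close>
    by (simp add: power2_eq_square algebra_simps)
  then have "y * r = 0"
    by (simp flip: distrib_left)
  ultimately show ?thesis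
    using assms(1) by simp
qed

lemma mink_mean_curv_eq:
  assumes indep: "\<And>x y. x *\<^sub>R fs + y *\<^sub>R fv = 0 \<Longrightarrow> x = 0 \<and> y = 0"
  shows "mink_mean_curv fs fv (a *\<^sub>R fs + b *\<^sub>R fv) (c *\<^sub>R fs + d *\<^sub>R fv) = (a + d) / 2"
  unfolding mink_mean_curv_def
proof (rule the_equality)
  fix H
  assume "\<exists>a' b' c' d'. a *\<^sub>R fs + b *\<^sub>R fv = a' *\<^sub>R fs + b' *\<^sub>R fv
      \<and> c *\<^sub>R fs + d *\<^sub>R fv = c' *\<^sub>R fs + d' *\<^sub>R fv \<and> H = (a' + d') / 2"
  then obtain a' b' c' d' where coeffs:
      "(a - a') *\<^sub>R fs + (b - b') *\<^sub>R fv = 0" "(c - c') *\<^sub>R fs + (d - d') *\<^sub>R fv = 0"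
      and H: "H = (a' + d') / 2"
    by (auto simp: algebra_simps)
  then show "H = (a + d) / 2"
    using indep[OF coeffs(1)] indep[OF coeffs(2)] by simp
qed blast

lemma dEta_endomorphism_combination:
  "dEta_endomorphism fs fv (a *\<^sub>R fs + b *\<^sub>R fv) (c *\<^sub>R fs + d *\<^sub>R fv)"
  unfolding dEta_endomorphism_def by blast

lemma bounded_linear_columns: "bounded_linear (\<lambda>h. fst h *\<^sub>R a + snd h *\<^sub>R b)"
  by (intro bounded_linear_add bounded_linear_compose[OF bounded_linear_scaleR_left]
      bounded_linear_fst bounded_linear_snd)

lemma continuous_on_Blinfun_columns:
  fixes a b :: "'d::t2_space \<Rightarrow> 'v::real_normed_vector"
  assumes "continuous_on D a" "continuous_on D b"
  shows "continuous_on D (\<lambda>p. Blinfun (\<lambda>h. fst h *\<^sub>R a p + snd h *\<^sub>R b p))"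
  by (rule continuous_on_blinfun_componentwise)
    (simp add: bounded_linear_Blinfun_apply[OF bounded_linear_columns] continuous_intros assms)

section \<open>The meridian of the unit sphere and the height function\<close>

definition sphere_radius :: "nat \<Rightarrow> real \<Rightarrow> real" where
  "sphere_radius m z = root (2*m) (1 - z^(2*m))"

lemma sphere_radius_minus [simp]: "sphere_radius m (-z) = sphere_radius m z"
  by (simp add: sphere_radius_def)

text \<open>The surface height, in units of c2 and measured from the neck, at which the Birkhoff-Gauss
  map has height z; see \<open>J_eq\<close>.\<close>

definition surface_height :: "nat \<Rightarrow> real \<Rightarrow> real" where
  "surface_height m z =
     (if 0 \<le> z then integral {0..z} (\<lambda>t. 1 / sphere_radius m t ^ 2)
      else - integral {z..0} (\<lambda>t. 1 / sphere_radius m t ^ 2))"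

lemma surface_height_0 [simp]: "surface_height m 0 = 0"
  by (simp add: surface_height_def)

lemma surface_height_minus: "surface_height m (-z) = - surface_height m z"
proof -
  have reflect: "integral {-b..-a} (\<lambda>t. 1 / sphere_radius m t ^ 2)
      = integral {a..b} (\<lambda>t. 1 / sphere_radius m t ^ 2)" for a b
    using Henstock_Kurzweil_Integration.integral_reflect_real[of b a "\<lambda>t. 1 / sphere_radius m t ^ 2"] by simp
  show ?thesis
    using reflect[of 0 z] reflect[of z 0] by (cases z "0::real" rule: linorder_cases)
      (auto simp: surface_height_def)
qed

definition surface_height_sup :: "nat \<Rightarrow> real" where
  "surface_height_sup m = Sup (surface_height m ` {0..<1})"

definition gauss_height :: "nat \<Rightarrow> real \<Rightarrow> real" where
  "gauss_height m = inv_into {-1<..<1} (surface_height m)"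

locale power_gauge =
  fixes m :: nat
  assumes m_pos: "0 < m"
begin

lemma even_power_less_one: "\<bar>z::real\<bar> < 1 \<Longrightarrow> z^(2*m) < 1"
  using m_pos power_strict_mono[of "\<bar>z\<bar>" 1 "2*m"] by (simp add: power_even_abs)

lemma sphere_radius_pos: "\<bar>z\<bar> < 1 \<Longrightarrow> 0 < sphere_radius m z"
  using even_power_less_one m_pos by (simp add: sphere_radius_def)

lemma sphere_radius_le_one: "sphere_radius m z \<le> 1"
  using m_pos by (simp add: sphere_radius_def zero_le_even_power)

lemma sphere_radius_power:
  assumes "\<bar>z\<bar> \<le> 1" shows "sphere_radius m z ^ (2*m) = 1 - z^(2*m)"
proof -
  have "z^(2*m) \<le> 1"
    using assms power_mono[of "\<bar>z\<bar>" 1 "2*m"] by (simp add: power_even_abs)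
  then show ?thesis
    using m_pos by (simp add: sphere_radius_def del: power_mult)
qed

lemma sphere_radius_0 [simp]: "sphere_radius m 0 = 1"
  using m_pos by (simp add: sphere_radius_def)

lemma sphere_radius_sphere_radius:
  assumes "\<bar>z\<bar> \<le> 1" shows "sphere_radius m (sphere_radius m z) = \<bar>z\<bar>"
proof -
  have "1 - sphere_radius m z ^ (2*m) = \<bar>z\<bar> ^ (2*m)"
    using sphere_radius_power[OF assms] by (simp add: power_even_abs)
  then show ?thesis
    using m_pos by (simp add: sphere_radius_def real_root_power_cancel)
qed

lemma sphere_radius_nonneg: "\<bar>z\<bar> \<le> 1 \<Longrightarrow> 0 \<le> sphere_radius m z"
  using m_pos power_mono[of "\<bar>z\<bar>" 1 "2*m"] by (simp add: sphere_radius_def power_even_abs)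

lemma sphere_radius_less_one: "z \<noteq> 0 \<Longrightarrow> sphere_radius m z < 1"
  using m_pos by (simp add: sphere_radius_def power_mult zero_less_power)

lemma sphere_radius_strict_antimono: "0 \<le> a \<Longrightarrow> a < b \<Longrightarrow> sphere_radius m b < sphere_radius m a"
  using m_pos power_strict_mono[of a b "2*m"] by (simp add: sphere_radius_def)

lemma sphere_radius_has_real_derivative:
  assumes "\<bar>z\<bar> < 1"
  shows "(sphere_radius m has_real_derivative - ((z / sphere_radius m z)^(2*m-1))) (at z)"
proof -
  have w: "0 < 1 - z^(2*m)"
    using even_power_less_one[OF assms] by simp
  have inner: "((\<lambda>z. 1 - z^(2*m)) has_real_derivative - (real (2*m) * z^(2*m-1))) (at z)"
    by (auto intro!: derivative_eq_intros)
  have "DERIV (root (2*m)) (1 - z^(2*m)) :> inverse (real (2*m) * sphere_radius m z ^ (2*m - Suc 0))"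
    unfolding sphere_radius_def using m_pos w by (intro DERIV_real_root) auto
  from DERIV_chain2[OF this inner] show ?thesis
    unfolding sphere_radius_def[abs_def] using m_pos by (simp add: power_divide field_simps)
qed

lemma sphere_slope_has_real_derivative:
  assumes "\<bar>z\<bar> < 1"
  shows "((\<lambda>z. z / sphere_radius m z) has_real_derivative 1 / sphere_radius m z ^ (2*m+1)) (at z)"
proof -
  define t where "t = sphere_radius m z"
  have t: "0 < t" "t^(2*m) = 1 - z^(2*m)"
    using sphere_radius_pos sphere_radius_power assms by (auto simp: t_def)
  have "(t + z * (z / t)^(2*m-1)) / (t * t) = (t^(2*m) + z^(2*m)) / t^(2*m+1)"
    using t(1) m_pos by (simp add: power_divide field_simps flip: power_Suc)
  also have "\<dots> = 1 / t^(2*m+1)"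
    using t(2) by simp
  finally have "(1 * t - z * - ((z / t)^(2*m-1))) / (t * t) = 1 / t^(2*m+1)"
    by simp
  with DERIV_divide[OF DERIV_ident sphere_radius_has_real_derivative[OF assms]] t(1) show ?thesis
    by (simp add: t_def)
qed

lemma continuous_on_inverse_sphere_radius_square:
  assumes "S \<subseteq> {-1<..<1}"
  shows "continuous_on S (\<lambda>t. 1 / sphere_radius m t ^ 2)"
proof (rule continuous_at_imp_continuous_on, intro ballI)
  fix t assume "t \<in> S"
  then have "\<bar>t\<bar> < 1"
    using assms by (auto simp: abs_less_iff)
  then show "isCont (\<lambda>t. 1 / sphere_radius m t ^ 2) t"
    using sphere_radius_pos[of t] DERIV_isCont[OF sphere_radius_has_real_derivative]
    by (auto intro!: continuous_intros)
qed

lemma surface_height_has_real_derivative: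
  assumes z: "\<bar>z\<bar> < 1"
  shows "(surface_height m has_real_derivative 1 / sphere_radius m z ^ 2) (at z)"
proof -
  define g where "g = (\<lambda>t. 1 / sphere_radius m t ^ 2)"
  define b where "b = (1 + \<bar>z\<bar>) / 2"
  have b: "\<bar>z\<bar> < b" "b < 1"
    using z by (auto simp: b_def)
  have cont: "continuous_on {-b..b} g"
    unfolding g_def using b by (intro continuous_on_inverse_sphere_radius_square) auto
  then have int: "g integrable_on {-b..b}"
    by (rule integrable_continuous_real)
  have shift: "integral {-b..y} g - integral {-b..0} g = surface_height m y" if "y \<in> {-b<..<b}" for y
  proof (cases "0 \<le> y")
    case True
    then have "integral {-b..0} g + integral {0..y} g = integral {-b..y} g"
      using that b by (intro Henstock_Kurzweil_Integration.integral_combine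
          integrable_on_subinterval[OF int]) auto
    with True show ?thesis by (simp add: surface_height_def g_def)
  next
    case False
    then have "integral {-b..y} g + integral {y..0} g = integral {-b..0} g"
      using that b by (intro Henstock_Kurzweil_Integration.integral_combine
          integrable_on_subinterval[OF int]) auto
    with False show ?thesis by (simp add: surface_height_def g_def)
  qed
  have "((\<lambda>y. integral {-b..y} g) has_real_derivative g z) (at z within {-b..b})"
    using cont b by (intro integral_has_real_derivative) auto
  moreover have "at z within {-b..b} = at z"
    using b by (intro at_within_Icc_at) auto
  ultimately have "((\<lambda>y. integral {-b..y} g - integral {-b..0} g)
      has_real_derivative 1 / sphere_radius m z ^ 2) (at z)"
    by (auto intro!: derivative_eq_intros simp: g_def)
  then show ?thesis
    by (rule has_field_derivative_transform_within_open[where S="{-b<..<b}"])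
      (use b shift in auto)
qed

lemma continuous_on_surface_height: "continuous_on {-1<..<1} (surface_height m)"
  using DERIV_isCont[OF surface_height_has_real_derivative]
  by (intro continuous_at_imp_continuous_on) auto

lemma surface_height_strict_mono: "strict_mono_on {-1<..<1} (surface_height m)"
proof (rule strict_mono_onI)
  fix x y :: real
  assume xy: "x \<in> {-1<..<1}" "y \<in> {-1<..<1}" "x < y"
  show "surface_height m x < surface_height m y"
  proof (rule DERIV_pos_imp_increasing_open[OF \<open>x < y\<close>])
    fix t assume "x < t" "t < y"
    then have "\<bar>t\<bar> < 1"
      using xy by auto
    then show "\<exists>d. (surface_height m has_real_derivative d) (at t) \<and> 0 < d"
      using surface_height_has_real_derivative sphere_radius_pos[of t]
      by (intro exI[of _ "1 / sphere_radius m t ^ 2"] conjI) auto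
  next
    show "continuous_on {x..y} (surface_height m)"
      using xy by (intro continuous_on_subset[OF continuous_on_surface_height]) auto
  qed
qed

lemma surface_height_abs: "\<bar>z\<bar> < 1 \<Longrightarrow> surface_height m \<bar>z\<bar> = \<bar>surface_height m z\<bar>"
  using strict_mono_onD[OF surface_height_strict_mono, of 0 z]
    strict_mono_onD[OF surface_height_strict_mono, of z 0]
  by (cases z "0::real" rule: linorder_cases) (auto simp: surface_height_minus)

end

text \<open>For m = 1 the surface height is unbounded (catenoid); from m = 2 on it is bounded.\<close>

locale power_gauge_ge_2 = power_gauge +
  assumes m_ge_2: "2 \<le> m"
begin

lemma inverse_sphere_radius_square_le:
  assumes "0 \<le> z" "z < 1"
  shows "1 / sphere_radius m z ^ 2 \<le> 1 / sqrt (1 - z)"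
proof -
  define t where "t = sphere_radius m z"
  have t: "0 < t" "t \<le> 1" "t^(2*m) = 1 - z^(2*m)"
    using assms sphere_radius_pos sphere_radius_le_one
      sphere_radius_power by (auto simp: t_def)
  have "z^(2*m) \<le> z^1"
    using assms m_ge_2 by (intro power_decreasing) auto
  then have "1 - z \<le> t^(2*m)"
    using t by simp
  also have "t^(2*m) \<le> (t^2)^2"
    using t m_ge_2 power_decreasing[of 4 "2*m" t] by simp
  finally have "sqrt (1 - z) \<le> t^2"
    by (intro real_le_lsqrt) auto
  then show ?thesis
    using assms t by (intro divide_left_mono) (auto simp: t_def)
qed

lemma surface_height_le_two:
  assumes z: "0 \<le> z" "z < 1"
  shows "surface_height m z \<le> 2"
proof -
  have "((\<lambda>t. - 2 * sqrt (1 - t)) has_vector_derivative 1 / sqrt (1 - t)) (at t within {0..z})"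
    if "t \<in> {0..z}" for t
  proof -
    have "t < 1"
      using that z by auto
    then have "((\<lambda>t. - 2 * sqrt (1 - t)) has_real_derivative 1 / sqrt (1 - t)) (at t)"
      by (auto intro!: derivative_eq_intros simp: divide_simps)
    then show ?thesis
      by (simp add: has_real_derivative_iff_has_vector_derivative has_vector_derivative_at_within)
  qed
  from fundamental_theorem_of_calculus[OF z(1) this]
  have bound: "((\<lambda>t. 1 / sqrt (1 - t)) has_integral 2 - 2 * sqrt (1 - z)) {0..z}"
    by simp
  have "continuous_on {0..z} (\<lambda>t. 1 / sphere_radius m t ^ 2)"
    using z by (intro continuous_on_inverse_sphere_radius_square) auto
  then have height: "((\<lambda>t. 1 / sphere_radius m t ^ 2) has_integral surface_height m z) {0..z}"
    using z by (simp add: surface_height_def integrable_integral integrable_continuous_real)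
  have "surface_height m z \<le> 2 - 2 * sqrt (1 - z)"
    by (rule has_integral_le[OF height bound]) (use z in \<open>auto intro: inverse_sphere_radius_square_le\<close>)
  moreover have "0 \<le> sqrt (1 - z)"
    using z by simp
  ultimately show ?thesis
    by linarith
qed

lemma bdd_above_surface_height: "bdd_above (surface_height m ` {0..<1})"
  using surface_height_le_two by (auto intro!: bdd_aboveI[of _ 2])

lemma surface_height_le_sup: "0 \<le> z \<Longrightarrow> z < 1 \<Longrightarrow> surface_height m z \<le> surface_height_sup m"
  unfolding surface_height_sup_def by (intro cSup_upper bdd_above_surface_height) auto

lemma abs_surface_height_less_sup:
  assumes "\<bar>z\<bar> < 1"
  shows "\<bar>surface_height m z\<bar> < surface_height_sup m"
proof -
  have "surface_height m \<bar>z\<bar> < surface_height m ((1 + \<bar>z\<bar>) / 2)"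
    using assms by (intro strict_mono_onD[OF surface_height_strict_mono]) auto
  also have "\<dots> \<le> surface_height_sup m"
    using assms by (intro surface_height_le_sup) auto
  finally show ?thesis
    using surface_height_abs[OF assms] by simp
qed

lemma surface_height_sup_pos: "0 < surface_height_sup m"
  using abs_surface_height_less_sup[of 0] by simp

lemma less_surface_height_sup_iff:
  "y < surface_height_sup m \<longleftrightarrow> (\<exists>z. 0 \<le> z \<and> z < 1 \<and> y < surface_height m z)"
  unfolding surface_height_sup_def by (subst less_cSup_iff[OF _ bdd_above_surface_height]) auto

lemma tendsto_surface_height_sup: "(surface_height m \<longlongrightarrow> surface_height_sup m) (at_left 1)"
proof (rule order_tendstoI)
  fix a assume "a < surface_height_sup m"
  then obtain z where z: "0 \<le> z" "z < 1" "a < surface_height m z"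
    by (auto simp: less_surface_height_sup_iff)
  have "a < surface_height m x" if "x \<in> {z<..<1}" for x
    using z that strict_mono_onD[OF surface_height_strict_mono, of z x] by auto
  then show "eventually (\<lambda>x. a < surface_height m x) (at_left 1)"
    using eventually_at_left_real[OF z(2)] by (rule eventually_mono[rotated])
next
  fix a assume "surface_height_sup m < a"
  then have "surface_height m x < a" if "x \<in> {0<..<1}" for x
    using that surface_height_le_sup[of x] by auto
  then show "eventually (\<lambda>x. surface_height m x < a) (at_left 1)"
    using eventually_at_left_real[of 0 1] by (auto elim: eventually_mono)
qed

lemma surface_height_image:
  "surface_height m ` {-1<..<1} = {-surface_height_sup m<..<surface_height_sup m}"
proof
  show "surface_height m ` {-1<..<1} \<subseteq> {-surface_height_sup m<..<surface_height_sup m}"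
  proof (rule image_subsetI)
    fix z :: real assume "z \<in> {-1<..<1}"
    then have "\<bar>surface_height m z\<bar> < surface_height_sup m"
      by (intro abs_surface_height_less_sup) auto
    then show "surface_height m z \<in> {-surface_height_sup m<..<surface_height_sup m}"
      by (simp add: abs_less_iff)
  qed
next
  have nonneg: "y \<in> surface_height m ` {-1<..<1}" if y: "0 \<le> y" "y < surface_height_sup m" for y
  proof -
    obtain z where z: "0 \<le> z" "z < 1" "y < surface_height m z"
      using y(2) by (auto simp: less_surface_height_sup_iff)
    have "continuous_on {0..z} (surface_height m)"
      using z by (intro continuous_on_subset[OF continuous_on_surface_height]) auto
    then obtain x where "0 \<le> x" "x \<le> z" "surface_height m x = y"
      using IVT'[of "surface_height m" 0 y z] y z by auto
    with z show ?thesis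
      by (intro image_eqI[of _ _ x]) auto
  qed
  show "{-surface_height_sup m<..<surface_height_sup m} \<subseteq> surface_height m ` {-1<..<1}"
  proof
    fix y assume y: "y \<in> {-surface_height_sup m<..<surface_height_sup m}"
    show "y \<in> surface_height m ` {-1<..<1}"
    proof (cases "0 \<le> y")
      case True
      with y show ?thesis
        by (intro nonneg) auto
    next
      case False
      with y obtain x where "x \<in> {-1<..<1}" "surface_height m x = -y"
        using nonneg[of "-y"] by auto
      then show ?thesis
        by (intro image_eqI[of _ _ "-x"]) (auto simp: surface_height_minus)
    qed
  qed
qed

lemma gauss_height:
  assumes "\<bar>y\<bar> < surface_height_sup m"
  shows "\<bar>gauss_height m y\<bar> < 1" "surface_height m (gauss_height m y) = y"
proof -
  have y: "y \<in> surface_height m ` {-1<..<1}"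
    using assms by (auto simp: surface_height_image abs_less_iff)
  then have "gauss_height m y \<in> {-1<..<1}"
    unfolding gauss_height_def by (rule inv_into_into)
  then show "\<bar>gauss_height m y\<bar> < 1"
    by (simp add: abs_less_iff)
  from y show "surface_height m (gauss_height m y) = y"
    unfolding gauss_height_def by (rule f_inv_into_f)
qed

lemma gauss_height_surface_height: "\<bar>z\<bar> < 1 \<Longrightarrow> gauss_height m (surface_height m z) = z"
  unfolding gauss_height_def
  by (auto intro!: inv_into_f_f strict_mono_on_imp_inj_on surface_height_strict_mono
      simp: abs_less_iff)

lemma gauss_height_0 [simp]: "gauss_height m 0 = 0"
  using gauss_height_surface_height[of 0] by simp

lemma gauss_height_has_real_derivative:
  assumes y: "\<bar>y\<bar> < surface_height_sup m"
  shows "(gauss_height m has_real_derivative sphere_radius m (gauss_height m y) ^ 2) (at y)"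
proof -
  define z where "z = gauss_height m y"
  have z: "\<bar>z\<bar> < 1" "surface_height m z = y"
    using gauss_height[OF y] by (auto simp: z_def)
  have "(surface_height m has_derivative (*) (1 / sphere_radius m z ^ 2)) (at z)"
    using surface_height_has_real_derivative[OF z(1)] by (simp only: has_field_derivative_def)
  moreover have "(*) (1 / sphere_radius m z ^ 2) \<circ> (*) (sphere_radius m z ^ 2) = id"
    using sphere_radius_pos[OF z(1)] by (auto simp: fun_eq_iff)
  moreover have "gauss_height m (surface_height m x) = x" if "x \<in> {-1<..<1}" for x
    using that by (intro gauss_height_surface_height) (simp add: abs_less_iff)
  moreover have "z \<in> {-1<..<1}"
    using z(1) by (simp add: abs_less_iff)
  ultimately have "(gauss_height m has_derivative (*) (sphere_radius m z ^ 2)) (at (surface_height m z))"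
    by (intro has_derivative_inverse_strong[OF open_greaterThanLessThan _
          continuous_on_surface_height])
  then show ?thesis
    unfolding z(2) by (simp only: has_field_derivative_def z_def)
qed

section \<open>The integral J and its inverse\<close>

context
  fixes c2 :: real
  assumes c2: "0 < c2"
begin

lemma J_integrand_eq:
  assumes x: "c2 < x"
  shows "J_integrand m c2 x = (c2/x / sphere_radius m (c2/x)) ^ (2*m-1)"
proof -
  define r where "r = c2/x"
  have r: "0 < r" "r < 1"
    using c2 x by (auto simp: r_def)
  define y where "y = x * sphere_radius m r"
  have y: "0 < y"
    using r x c2 sphere_radius_pos[of r] by (simp add: y_def)
  have "y^(2*m) = x^(2*m) * (1 - r^(2*m))"
    using r by (simp add: y_def power_mult_distrib sphere_radius_power)
  also have "\<dots> = x^(2*m) - c2^(2*m)"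
    using x c2 by (simp add: r_def power_divide field_simps)
  finally have y_power: "x^(2*m) - c2^(2*m) = y^(2*m)" ..
  have "(y^(2*m)) powr (- (real (2*m-1) / real (2*m)))
      = y powr (real (2*m) * (- (real (2*m-1) / real (2*m))))"
    using y by (simp add: powr_realpow[symmetric] powr_powr del: of_nat_mult)
  also have "real (2*m) * (- (real (2*m-1) / real (2*m))) = - real (2*m-1)"
    using m_pos by simp
  also have "y powr (- real (2*m-1)) = 1 / y^(2*m-1)"
    using y by (simp add: powr_minus powr_realpow divide_inverse)
  finally have "(x^(2*m) - c2^(2*m)) powr (- (real (2*m-1) / real (2*m))) = 1 / y^(2*m-1)"
    unfolding y_power .
  then show ?thesis
    using x c2 by (simp add: J_integrand_def y_def r_def power_divide power_mult_distrib field_simps)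
qed

lemma J_integrand_has_integral:
  assumes x: "c2 \<le> x"
  shows "(J_integrand m c2 has_integral c2 * surface_height m (sphere_radius m (c2/x))) {c2..x}"
proof -
  define F where "F x = c2 * surface_height m (sphere_radius m (c2/x))" for x
  have radius_range: "\<bar>sphere_radius m (c2/t)\<bar> < 1" if "c2 \<le> t" for t
    using that c2 sphere_radius_nonneg[of "c2/t"] sphere_radius_less_one[of "c2/t"]
    by auto
  have "continuous_on {c2..x} (\<lambda>t. sphere_radius m (c2/t))"
    using c2 unfolding sphere_radius_def by (auto intro!: continuous_intros)
  then have "continuous_on {c2..x} F"
    unfolding F_def using radius_range
    by (intro continuous_intros continuous_on_compose2[OF continuous_on_surface_height])
      (auto simp: abs_less_iff)
  moreover have "(F has_real_derivative J_integrand m c2 t) (at t)" if t: "t \<in> {c2<..<x}" for t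
  proof -
    define r where "r = c2/t"
    have r: "0 < r" "r < 1"
      using c2 t by (auto simp: r_def)
    have "((\<lambda>t. sphere_radius m (c2/t)) has_real_derivative
        - ((r / sphere_radius m r)^(2*m-1)) * (- (c2 / t^2))) (at t)"
      unfolding r_def using r c2 t
      by (intro DERIV_chain2[OF sphere_radius_has_real_derivative])
        (auto intro!: derivative_eq_intros simp: power2_eq_square)
    from DERIV_cmult[OF DERIV_chain2[OF surface_height_has_real_derivative this], of c2]
    have "(F has_real_derivative c2 * (1 / r^2 * ((r / sphere_radius m r)^(2*m-1) * (c2 / t^2)))) (at t)"
      using radius_range[of t] t r
      by (simp add: F_def[abs_def] r_def[symmetric] sphere_radius_sphere_radius)
    moreover have "c2 * (1 / r^2 * ((r / sphere_radius m r)^(2*m-1) * (c2 / t^2))) = J_integrand m c2 t"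
      using t c2 by (simp add: J_integrand_eq r_def field_simps power2_eq_square)
    ultimately show ?thesis
      by simp
  qed
  ultimately have "(J_integrand m c2 has_integral F x - F c2) {c2..x}"
    using x by (intro fundamental_theorem_of_calculus_interior)
      (auto simp: has_real_derivative_iff_has_vector_derivative[symmetric])
  moreover have "F c2 = 0"
    using c2 m_pos by (simp add: F_def sphere_radius_def)
  ultimately have "(J_integrand m c2 has_integral F x) {c2..x}"
    by simp
  then show ?thesis
    by (simp add: F_def)
qed

lemma J_eq: "c2 \<le> x \<Longrightarrow> J m c2 x = c2 * surface_height m (sphere_radius m (c2/x))"
  unfolding J_def by (rule integral_unique[OF J_integrand_has_integral])

lemma sphere_radius_divide_bounds:
  assumes "c2 \<le> x"
  shows "0 \<le> sphere_radius m (c2/x)" "sphere_radius m (c2/x) < 1"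
  using assms c2 sphere_radius_nonneg[of "c2/x"] sphere_radius_less_one[of "c2/x"]
  by auto

lemma J_bounds: "c2 \<le> x \<Longrightarrow> 0 \<le> J m c2 x \<and> J m c2 x < c2 * surface_height_sup m"
  using c2 sphere_radius_divide_bounds[of x] abs_surface_height_less_sup[of "sphere_radius m (c2/x)"]
    surface_height_abs[of "sphere_radius m (c2/x)"]
  by (auto simp: J_eq)

lemma J_strict_mono: "strict_mono_on {c2..} (J m c2)"
proof (rule strict_mono_onI)
  fix x y assume xy: "x \<in> {c2..}" "y \<in> {c2..}" "x < y"
  then have "sphere_radius m (c2/x) < sphere_radius m (c2/y)"
    using c2 by (intro sphere_radius_strict_antimono) (auto simp: frac_less2)
  then have "surface_height m (sphere_radius m (c2/x)) < surface_height m (sphere_radius m (c2/y))"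
    using xy sphere_radius_divide_bounds[of x] sphere_radius_divide_bounds[of y]
    by (intro strict_mono_onD[OF surface_height_strict_mono]) auto
  then show "J m c2 x < J m c2 y"
    using xy c2 by (simp add: J_eq)
qed

lemma J_divide_sphere_radius:
  assumes z: "\<bar>z\<bar> < 1"
  shows "c2 \<le> c2 / sphere_radius m z" "J m c2 (c2 / sphere_radius m z) = c2 * \<bar>surface_height m z\<bar>"
proof -
  have t: "0 < sphere_radius m z" "sphere_radius m z \<le> 1"
    using z sphere_radius_pos sphere_radius_le_one by auto
  then show "c2 \<le> c2 / sphere_radius m z"
    using c2 by (simp add: field_simps)
  then show "J m c2 (c2 / sphere_radius m z) = c2 * \<bar>surface_height m z\<bar>"
    using t z c2 by (simp add: J_eq sphere_radius_sphere_radius surface_height_abs)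
qed

lemma J_image: "J m c2 ` {c2..} = {0..<c2 * surface_height_sup m}"
proof
  show "J m c2 ` {c2..} \<subseteq> {0..<c2 * surface_height_sup m}"
    using J_bounds by auto
next
  show "{0..<c2 * surface_height_sup m} \<subseteq> J m c2 ` {c2..}"
  proof
    fix y assume y: "y \<in> {0..<c2 * surface_height_sup m}"
    define z where "z = gauss_height m (y / c2)"
    have "\<bar>y / c2\<bar> < surface_height_sup m"
      using y c2 by (auto simp: field_simps)
    then have z: "\<bar>z\<bar> < 1" "surface_height m z = y / c2"
      using gauss_height by (auto simp: z_def)
    then have "J m c2 (c2 / sphere_radius m z) = y"
      using y c2 J_divide_sphere_radius[OF z(1)] by auto
    with J_divide_sphere_radius(1)[OF z(1)] show "y \<in> J m c2 ` {c2..}"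
      by (intro image_eqI[of _ _ "c2 / sphere_radius m z"]) auto
  qed
qed

lemma J_tendsto: "(J m c2 \<longlongrightarrow> c2 * surface_height_sup m) at_top"
proof -
  have "((\<lambda>x. sphere_radius m (c2/x)) \<longlongrightarrow> sphere_radius m 0) at_top"
    unfolding sphere_radius_def
    by (intro tendsto_intros tendsto_divide_0[OF tendsto_const] filterlim_at_top_imp_at_infinity
        filterlim_ident)
  moreover have "eventually (\<lambda>x. sphere_radius m (c2/x) < 1) at_top"
    using eventually_ge_at_top[of c2] by eventually_elim (use sphere_radius_divide_bounds in blast)
  ultimately have "filterlim (\<lambda>x. sphere_radius m (c2/x)) (at_left 1) at_top"
    using m_pos by (intro tendsto_imp_filterlim_at_left) auto
  from filterlim_compose[OF tendsto_surface_height_sup this]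
  have "((\<lambda>x. c2 * surface_height m (sphere_radius m (c2/x))) \<longlongrightarrow> c2 * surface_height_sup m) at_top"
    by (intro tendsto_mult_left)
  moreover have "eventually (\<lambda>x. c2 * surface_height m (sphere_radius m (c2/x)) = J m c2 x) at_top"
    using eventually_ge_at_top[of c2] by eventually_elim (simp add: J_eq)
  ultimately show ?thesis
    by (rule Lim_transform_eventually)
qed

lemma J_eq_abs_imp_eq_profile:
  assumes x: "c2 \<le> x" "J m c2 x = \<bar>y\<bar>"
  shows "x = c2 / sphere_radius m (gauss_height m (y / c2))"
proof -
  define z where "z = gauss_height m (y / c2)"
  have "\<bar>y / c2\<bar> < surface_height_sup m"
    using J_bounds[OF x(1)] x(2) c2 by (simp add: field_simps)
  then have z: "\<bar>z\<bar> < 1" "surface_height m z = y / c2"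
    using gauss_height by (auto simp: z_def)
  have "J m c2 (c2 / sphere_radius m z) = J m c2 x"
    using J_divide_sphere_radius[OF z(1)] z(2) x(2) c2 by (simp add: abs_divide)
  with x(1) J_divide_sphere_radius(1)[OF z(1)] show ?thesis
    unfolding z_def[symmetric]
    by (metis strict_mono_on_imp_inj_on[OF J_strict_mono] atLeast_iff inj_onD)
qed

lemma profile_filterlim_at_top:
  assumes profile: "\<forall>u\<in>{c3 - c2 * surface_height_sup m<..<c3 + c2 * surface_height_sup m}.
      c2 \<le> a u \<and> J m c2 (a u) = \<bar>u - c3\<bar>"
  shows "filterlim a at_top (at_left (c3 + c2 * surface_height_sup m))"
    and "filterlim a at_top (at_right (c3 - c2 * surface_height_sup m))"
proof -
  define d where "d = c2 * surface_height_sup m"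
  have d: "0 < d"
    using c2 surface_height_sup_pos by (simp add: d_def)
  have "filterlim a at_top F"
    if F: "eventually (\<lambda>u. u \<in> {c3 - d<..<c3 + d}) F" and lim: "((\<lambda>u. \<bar>u - c3\<bar>) \<longlongrightarrow> d) F" for F
  proof (rule filterlim_at_top_if_strict_mono_tendsto[OF J_strict_mono])
    show "J m c2 x < d" if "c2 \<le> x" for x
      using J_bounds[OF that] by (simp add: d_def)
    have "eventually (\<lambda>u. \<bar>u - c3\<bar> = J m c2 (a u)) F"
      using F profile by (auto elim: eventually_mono simp: d_def)
    with lim show "((\<lambda>u. J m c2 (a u)) \<longlongrightarrow> d) F"
      by (rule Lim_transform_eventually)
    show "eventually (\<lambda>u. c2 \<le> a u) F"
      using F profile by (auto elim: eventually_mono simp: d_def)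
  qed
  moreover have "((\<lambda>u. \<bar>u - c3\<bar>) \<longlongrightarrow> d) (at_left (c3 + d))"
      "((\<lambda>u. \<bar>u - c3\<bar>) \<longlongrightarrow> d) (at_right (c3 - d))"
    using d by (auto intro!: tendsto_eq_intros)
  moreover have "eventually (\<lambda>u. u \<in> {c3 - d<..<c3 + d}) (at_left (c3 + d))"
      "eventually (\<lambda>u. u \<in> {c3 - d<..<c3 + d}) (at_right (c3 - d))"
    using d eventually_at_left_real[of "c3 - d" "c3 + d"] eventually_at_right_real[of "c3 - d" "c3 + d"]
    by simp_all
  ultimately show "filterlim a at_top (at_left (c3 + c2 * surface_height_sup m))"
    "filterlim a at_top (at_right (c3 - c2 * surface_height_sup m))"
    unfolding d_def[symmetric] by blast+
qed

lemma scaled_gauss_height: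
  assumes "\<bar>u - c3\<bar> < c2 * surface_height_sup m"
  shows "\<bar>gauss_height m ((u - c3) / c2)\<bar> < 1"
    and "((\<lambda>u. gauss_height m ((u - c3) / c2)) has_real_derivative
          sphere_radius m (gauss_height m ((u - c3) / c2))^2 / c2) (at u)"
proof -
  have y: "\<bar>(u - c3) / c2\<bar> < surface_height_sup m"
    using assms c2 by (simp add: abs_divide field_simps)
  then show "\<bar>gauss_height m ((u - c3) / c2)\<bar> < 1"
    by (rule gauss_height)
  have "((\<lambda>u. (u - c3) / c2) has_real_derivative 1 / c2) (at u)"
    using c2 by (auto intro!: derivative_eq_intros)
  from DERIV_chain2[OF gauss_height_has_real_derivative[OF y] this]
  show "((\<lambda>u. gauss_height m ((u - c3) / c2)) has_real_derivative
      sphere_radius m (gauss_height m ((u - c3) / c2))^2 / c2) (at u)"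
    by simp
qed

end

end

section \<open>Minimal rotational surfaces\<close>

context power_gauge
begin

text \<open>Here \<open>c2 / sphere_radius m (w u)\<close> is the profile of the surface and \<open>w u\<close> the height of its
  Birkhoff-Gauss map over the meridian point \<open>u\<close>.\<close>

context
  fixes c2 :: real and w :: "real \<Rightarrow> real" and I :: "real set"
  assumes c2: "0 < c2" and I: "open I"
    and height_bound: "\<And>u. u \<in> I \<Longrightarrow> \<bar>w u\<bar> < 1"
    and height_deriv: "\<And>u. u \<in> I \<Longrightarrow> (w has_real_derivative sphere_radius m (w u)^2 / c2) (at u)"
begin

lemma radius_of_height_pos: "u \<in> I \<Longrightarrow> 0 < sphere_radius m (w u)"
  using sphere_radius_pos[OF height_bound] .

lemma radius_of_height_has_real_derivative:
  assumes u: "u \<in> I"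
  shows "((\<lambda>u. sphere_radius m (w u)) has_real_derivative
    - ((w u / sphere_radius m (w u))^(2*m-1) * (sphere_radius m (w u)^2 / c2))) (at u)"
  using DERIV_chain2[OF sphere_radius_has_real_derivative[OF height_bound[OF u]] height_deriv[OF u]]
  by simp

lemma profile_has_real_derivative:
  assumes u: "u \<in> I"
  shows "((\<lambda>u. c2 / sphere_radius m (w u)) has_real_derivative (w u / sphere_radius m (w u))^(2*m-1)) (at u)"
proof -
  have "T \<noteq> 0" if "T = sphere_radius m (w u)" for T
    using radius_of_height_pos[OF u] that by simp
  from DERIV_divide[OF DERIV_const radius_of_height_has_real_derivative[OF u], of c2] this[OF refl]
  show ?thesis
    using c2 by (simp add: field_simps power2_eq_square)
qed

lemma profile_slope_has_real_derivative:
  assumes u: "u \<in> I"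
  shows "((\<lambda>u. (w u / sphere_radius m (w u))^(2*m-1)) has_real_derivative
    real (2*m-1) * (w u / sphere_radius m (w u))^(2*m-2) / (c2 * sphere_radius m (w u)^(2*m-1))) (at u)"
proof -
  define t where "t = sphere_radius m (w u)"
  have t: "0 < t"
    using radius_of_height_pos[OF u] by (simp add: t_def)
  have exponent: "2*m-1 - Suc 0 = 2*m-2"
    by simp
  have "t^(2*m+1) = t^(2*m-1) * t^2"
    using m_pos by (simp flip: power_add)
  with t have derivative_eq: "real (2*m-1) * (1 / t^(2*m+1) * (t^2 / c2) * (w u / t)^(2*m-2))
      = real (2*m-1) * (w u / t)^(2*m-2) / (c2 * t^(2*m-1))"
    by (simp add: field_simps)
  have "((\<lambda>u. (w u / sphere_radius m (w u))^(2*m-1)) has_real_derivative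
      real (2*m-1) * (1 / t^(2*m+1) * (t^2 / c2) * (w u / t)^(2*m-2))) (at u)"
    using DERIV_power[OF DERIV_chain2[OF sphere_slope_has_real_derivative[OF height_bound[OF u]]
          height_deriv[OF u]], of "2*m-1"]
    unfolding exponent t_def .
  then show ?thesis
    unfolding t_def[symmetric] derivative_eq .
qed

lemma continuous_on_radius_of_height: "continuous_on I (\<lambda>u. sphere_radius m (w u))"
  using DERIV_isCont[OF radius_of_height_has_real_derivative]
  by (intro continuous_at_imp_continuous_on) auto

lemma continuous_on_height: "continuous_on I w"
  using DERIV_isCont[OF height_deriv] by (intro continuous_at_imp_continuous_on) auto

lemma continuous_on_profile_second_derivative:
  "continuous_on I (\<lambda>u. real (2*m-1) * (w u / sphere_radius m (w u))^(2*m-2)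
      / (c2 * sphere_radius m (w u)^(2*m-1)))"
  using c2 by (intro continuous_intros continuous_on_height continuous_on_radius_of_height)
    (auto dest!: radius_of_height_pos)

lemma rot_surface_minimal:
  fixes V :: "real set"
  assumes profile: "\<And>u. u \<in> I \<Longrightarrow> a u = c2 / sphere_radius m (w u)"
  defines "D \<equiv> I \<times> V"
  shows "\<exists>(\<eta> :: real \<times> real \<Rightarrow> real^3) (\<eta>' :: real \<times> real \<Rightarrow> (real \<times> real) \<Rightarrow>\<^sub>L (real^3)).
    (\<forall>p\<in>D. BG_at m (rot_surface a) \<eta> p)
    \<and> (\<forall>p\<in>D. (\<eta> has_derivative blinfun_apply (\<eta>' p)) (at p within D))
    \<and> continuous_on D \<eta>'
    \<and> (\<forall>p\<in>D. dEta_endomorphism (partial_s (rot_surface a) p) (partial_v (rot_surface a) p)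
                 (blinfun_apply (\<eta>' p) (1,0)) (blinfun_apply (\<eta>' p) (0,1))
             \<and> mink_mean_curv (partial_s (rot_surface a) p) (partial_v (rot_surface a) p)
                 (blinfun_apply (\<eta>' p) (1,0)) (blinfun_apply (\<eta>' p) (0,1)) = 0)"
proof -
  define t where "t u = sphere_radius m (w u)" for u
  define s where "s u = (w u / t u)^(2*m-1)" for u
  define k where "k u = t u^2 / c2" for u
  define fs where "fs p = (vector [s (fst p) * cos (snd p), s (fst p) * sin (snd p), 1] :: real^3)" for p
  define fv where "fv p = (vector [- (c2 / t (fst p) * sin (snd p)), c2 / t (fst p) * cos (snd p), 0] :: real^3)"
    for p
  define \<eta> where "\<eta> p = (vector [- t (fst p) * cos (snd p), - t (fst p) * sin (snd p), w (fst p)] :: real^3)"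
    for p
  \<comment> \<open>\<open>\<eta>\<^sub>u = k f\<^sub>s\<close> and \<open>\<eta>\<^sub>v = -k f\<^sub>v\<close>: the differential is trace free.\<close>
  define \<eta>' where "\<eta>' p = Blinfun (\<lambda>h. fst h *\<^sub>R (k (fst p) *\<^sub>R fs p) + snd h *\<^sub>R (- k (fst p) *\<^sub>R fv p))"
    for p
  have \<eta>'_apply: "blinfun_apply (\<eta>' p) = (\<lambda>h. fst h *\<^sub>R (k (fst p) *\<^sub>R fs p) + snd h *\<^sub>R (- k (fst p) *\<^sub>R fv p))"
    for p
    unfolding \<eta>'_def by (rule bounded_linear_Blinfun_apply[OF bounded_linear_columns])
  have t_pos: "0 < t u" if "u \<in> I" for u
    using radius_of_height_pos[OF that] by (simp add: t_def)
  have a_deriv: "(a has_real_derivative s u) (at u)" if "u \<in> I" for u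
    unfolding s_def t_def
    by (rule has_field_derivative_transform_within_open[OF profile_has_real_derivative[OF that] I that])
      (simp add: profile)
  have partials: "partial_s (rot_surface a) (u, v) = fs (u, v)" "partial_v (rot_surface a) (u, v) = fv (u, v)"
    if "u \<in> I" for u v
    using partial_rot_surface[OF a_deriv[OF that]] profile[OF that] by (simp_all add: fs_def fv_def t_def)
  have \<eta>_deriv: "(\<eta> has_derivative blinfun_apply (\<eta>' (u, v))) (at (u, v))" if u: "u \<in> I" for u v
  proof -
    have "((\<lambda>u. - t u) has_real_derivative s u * k u) (at u)"
      using DERIV_minus[OF radius_of_height_has_real_derivative[OF u]] by (simp add: s_def k_def t_def)
    from has_derivative_rotation[OF this height_deriv[OF u], of v] show ?thesis
      unfolding \<eta>'_apply \<eta>_def[abs_def]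
      by (rule has_derivative_eq_rhs)
        (use t_pos[OF u] c2 in \<open>auto simp: fun_eq_iff vec_eq_iff forall_3 fs_def fv_def k_def t_def
          power2_eq_square field_simps\<close>)
  qed
  have D: "fst p \<in> I" if "p \<in> D" for p
    using that by (auto simp: D_def)
  have continuous_on_fst_I: "continuous_on D (\<lambda>p. f (fst p))" if "continuous_on I f" for f
    using D by (intro continuous_on_compose2[OF that continuous_on_fst[OF continuous_on_id]]) auto
  have "continuous_on D (\<lambda>p. t (fst p))" "continuous_on D (\<lambda>p. w (fst p))"
    unfolding t_def by (intro continuous_on_fst_I continuous_on_radius_of_height continuous_on_height)+
  then have "continuous_on D \<eta>'"
    unfolding \<eta>'_def fs_def fv_def k_def s_def using c2 D t_pos
    by (intro continuous_on_Blinfun_columns continuous_on_vector_3 continuous_intros)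
      (auto dest!: D t_pos)
  moreover have "BG_at m (rot_surface a) \<eta> (u, v)" if u: "u \<in> I" for u v
  proof (rule BG_at_rot_surface[OF m_pos a_deriv[OF u]])
    show "0 < a u" "0 < t u"
      using profile[OF u] t_pos[OF u] c2 by (simp_all add: t_def)
    show "t u ^ (2*m) + w u ^ (2*m) = 1"
      using sphere_radius_power height_bound[OF u] by (simp add: t_def)
    show "s u * t u ^ (2*m-1) = w u ^ (2*m-1)"
      using t_pos[OF u] by (simp add: s_def power_divide)
  qed (simp add: \<eta>_def)
  moreover have "dEta_endomorphism (partial_s (rot_surface a) (u, v)) (partial_v (rot_surface a) (u, v))
        (blinfun_apply (\<eta>' (u, v)) (1,0)) (blinfun_apply (\<eta>' (u, v)) (0,1))
      \<and> mink_mean_curv (partial_s (rot_surface a) (u, v)) (partial_v (rot_surface a) (u, v))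
        (blinfun_apply (\<eta>' (u, v)) (1,0)) (blinfun_apply (\<eta>' (u, v)) (0,1)) = 0"
    if u: "u \<in> I" for u v
  proof -
    have columns: "blinfun_apply (\<eta>' (u, v)) (1,0) = k u *\<^sub>R fs (u, v) + 0 *\<^sub>R fv (u, v)"
        "blinfun_apply (\<eta>' (u, v)) (0,1) = 0 *\<^sub>R fs (u, v) + (- k u) *\<^sub>R fv (u, v)"
      by (simp_all add: \<eta>'_apply)
    have indep: "x = 0 \<and> y = 0" if "x *\<^sub>R fs (u, v) + y *\<^sub>R fv (u, v) = 0" for x y
      using rotation_tangents_independent[of "c2 / t u"] that t_pos[OF u] c2
      by (simp add: fs_def fv_def)
    from mink_mean_curv_eq[where fs="fs (u, v)" and fv="fv (u, v)" and a="k u" and b=0 and c=0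
        and d="- k u", OF indep] show ?thesis
      using dEta_endomorphism_combination[where fs="fs (u, v)" and fv="fv (u, v)" and a="k u"
          and b=0 and c=0 and d="- k u"]
      unfolding partials[OF u] columns by simp
  qed
  ultimately show ?thesis
    using \<eta>_deriv D unfolding D_def
    by (intro exI[of _ \<eta>] exI[of _ \<eta>'] conjI ballI) (auto intro: has_derivative_at_withinI)
qed

lemma profile_C2:
  assumes m_ge_2: "2 \<le> m" and c3: "c3 \<in> I" "w c3 = 0"
    and profile: "\<And>u. u \<in> I \<Longrightarrow> a u = c2 / sphere_radius m (w u)"
  shows "\<exists>a1 a2. (\<forall>u\<in>I. (a has_real_derivative a1 u) (at u) \<and> (a1 has_real_derivative a2 u) (at u))
    \<and> continuous_on I a2 \<and> a1 c3 = 0 \<and> a2 c3 = 0"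
proof (intro exI conjI ballI)
  fix u assume u: "u \<in> I"
  show "(a has_real_derivative (w u / sphere_radius m (w u))^(2*m-1)) (at u)"
    by (rule has_field_derivative_transform_within_open[OF profile_has_real_derivative[OF u] I u])
      (simp add: profile)
  show "((\<lambda>u. (w u / sphere_radius m (w u))^(2*m-1)) has_real_derivative
      real (2*m-1) * (w u / sphere_radius m (w u))^(2*m-2) / (c2 * sphere_radius m (w u)^(2*m-1))) (at u)"
    by (rule profile_slope_has_real_derivative[OF u])
qed (use continuous_on_profile_second_derivative c3 m_ge_2 in simp_all)

end

end

theorem theorem4p2:
  fixes m :: nat and c2 c3 :: real
  assumes "m \<ge> 2" and "c2 > 0"
  shows "\<exists>d1. d1 > 0 \<and> (J m c2 \<longlongrightarrow> d1) at_top
    \<and> (\<forall>\<alpha>\<ge>c2. J_integrand m c2 integrable_on {c2..\<alpha>})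
    \<and> strict_mono_on {c2..} (J m c2) \<and> bij_betw (J m c2) {c2..} {0..<d1}
    \<and> (\<forall>ah :: real \<Rightarrow> real.
         (\<forall>u\<in>{c3-d1<..<c3+d1}. ah u \<ge> c2 \<and> J m c2 (ah u) = \<bar>u - c3\<bar>) \<longrightarrow>
         ah c3 = c2
         \<and> (\<exists>a1 a2. (\<forall>u\<in>{c3-d1<..<c3+d1}. (ah has_real_derivative a1 u) (at u)
                                          \<and> (a1 has_real_derivative a2 u) (at u))
                   \<and> continuous_on {c3-d1<..<c3+d1} a2
                   \<and> a1 c3 = 0 \<and> a2 c3 = 0)
         \<and> filterlim ah at_top (at_left (c3 + d1))
         \<and> filterlim ah at_top (at_right (c3 - d1))
         \<and> (let D = {c3-d1<..<c3+d1} \<times> {0..2*pi}; f = rot_surface ah in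
            \<exists>(\<eta> :: real \<times> real \<Rightarrow> real^3) (\<eta>' :: real \<times> real \<Rightarrow> ((real \<times> real) \<Rightarrow>\<^sub>L (real^3))).
              (\<forall>p\<in>D. BG_at m f \<eta> p)
              \<and> (\<forall>p\<in>D. (\<eta> has_derivative blinfun_apply (\<eta>' p)) (at p within D))
              \<and> continuous_on D \<eta>'
              \<and> (\<forall>p\<in>D. dEta_endomorphism (partial_s f p) (partial_v f p) (blinfun_apply (\<eta>' p) (1,0)) (blinfun_apply (\<eta>' p) (0,1))
                       \<and> mink_mean_curv (partial_s f p) (partial_v f p) (blinfun_apply (\<eta>' p) (1,0)) (blinfun_apply (\<eta>' p) (0,1)) = 0)))"
proof -
  interpret power_gauge_ge_2 m
    by standard (use assms(1) in auto)
  note c2 = assms(2)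
  show ?thesis
  proof (rule exI[of _ "c2 * surface_height_sup m"], intro conjI, goal_cases)
    case 1 show ?case using c2 surface_height_sup_pos by simp
  next
    case 2 show ?case by (rule J_tendsto[OF c2])
  next
    case 3 show ?case using J_integrand_has_integral[OF c2] by blast
  next
    case 4 show ?case by (rule J_strict_mono[OF c2])
  next
    case 5 show ?case
      unfolding bij_betw_def using strict_mono_on_imp_inj_on[OF J_strict_mono[OF c2]] J_image[OF c2] by blast
  next
    case 6 show ?case
    proof (intro allI impI, goal_cases)
      case (1 ah)
      let ?I = "{c3 - c2 * surface_height_sup m<..<c3 + c2 * surface_height_sup m}"
      define w where "w u = gauss_height m ((u - c3) / c2)" for u
      have ode: "\<bar>w u\<bar> < 1" "(w has_real_derivative sphere_radius m (w u)^2 / c2) (at u)"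
        if "u \<in> ?I" for u
        using scaled_gauss_height[OF c2, of u c3] that unfolding w_def[abs_def] by (auto simp: abs_less_iff)
      have radius: "ah u = c2 / sphere_radius m (w u)" if "u \<in> ?I" for u
        using 1 that J_eq_abs_imp_eq_profile[OF c2] by (auto simp: w_def)
      have c3: "c3 \<in> ?I" "w c3 = 0"
        using c2 surface_height_sup_pos by (auto simp: w_def)
      with radius have "ah c3 = c2"
        by simp
      with profile_C2[OF c2 open_greaterThanLessThan ode m_ge_2 c3 radius] profile_filterlim_at_top[OF c2 1]
        rot_surface_minimal[OF c2 open_greaterThanLessThan ode radius]
      show ?case
        unfolding Let_def by blast
    qed
  qed
qed

end
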